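(* Let $a,b\in\mathbb{C}$ with $a,b,a+b\notin\{0,-1\}$, and suppose $a\ne b$, $a\ne1$, $b\ne1$. Then $R_{a,b}$ has rank $6$ as a module over $\mathbb{C}[P_2,P_3]$.
   Context: For $a,b\in\mathbb{C}$, let $P_i=ax^i+by^i+(-ax-by)^i\in\mathbb{C}[x,y]$ for $i\ge2$, and let $R_{a,b}$ be the subalgebra of $\mathbb{C}[x,y]$ generated by the $P_i$, $i\ge2$. *)

theory Defs
  imports "HOL-Computational_Algebra.Polynomial"
begin

text \<open>The polynomial ring C[x,y] is represented as (C[x])[y], i.e. the type
  complex poly poly: the outer polynomial variable is y, the inner one is x.\<close>

definition cst :: "complex \<Rightarrow> complex poly poly" where
  "cst c = [:[:c:]:]"

definition varX :: "complex poly poly" where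
  "varX = [:[:0, 1:]:]"

definition varY :: "complex poly poly" where
  "varY = [:0, 1:]"

definition Pgen :: "complex \<Rightarrow> complex \<Rightarrow> nat \<Rightarrow> complex poly poly" where
  "Pgen a b i = cst a * varX ^ i + cst b * varY ^ i + (- (cst a * varX) - cst b * varY) ^ i"

inductive_set subalg :: "complex poly poly set \<Rightarrow> complex poly poly set"
  for G :: "complex poly poly set" where
  const: "cst c \<in> subalg G"
| gen: "g \<in> G \<Longrightarrow> g \<in> subalg G"
| add: "p \<in> subalg G \<Longrightarrow> q \<in> subalg G \<Longrightarrow> p + q \<in> subalg G"
| mult: "p \<in> subalg G \<Longrightarrow> q \<in> subalg G \<Longrightarrow> p * q \<in> subalg G"

definition R_ab :: "complex \<Rightarrow> complex \<Rightarrow> complex poly poly set" where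
  "R_ab a b = subalg {Pgen a b i | i. i \<ge> 2}"

definition A_ab :: "complex \<Rightarrow> complex \<Rightarrow> complex poly poly set" where
  "A_ab a b = subalg {Pgen a b 2, Pgen a b 3}"

definition lin_indep_over :: "complex poly poly set \<Rightarrow> complex poly poly list \<Rightarrow> bool" where
  "lin_indep_over A vs \<longleftrightarrow>
     (\<forall>cs. length cs = length vs \<longrightarrow> set cs \<subseteq> A \<longrightarrow>
        (\<Sum>i<length vs. cs ! i * vs ! i) = 0 \<longrightarrow> (\<forall>c\<in>set cs. c = 0))"

definition has_rank_over :: "complex poly poly set \<Rightarrow> complex poly poly set \<Rightarrow> nat \<Rightarrow> bool" where
  "has_rank_over A M n \<longleftrightarrow>
     (\<exists>vs. length vs = n \<and> set vs \<subseteq> M \<and> lin_indep_over A vs) \<and>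
     (\<forall>vs. set vs \<subseteq> M \<longrightarrow> lin_indep_over A vs \<longrightarrow> length vs \<le> n)"

end

theory Submission
  imports Defs
begin

text \<open>Write \<open>P = P\<^sub>2\<close> and \<open>Q = P\<^sub>3\<close>.

  Upper bound: \<open>P\<close> and \<open>Q\<close> are algebraically independent of total degrees \<open>2\<close> and \<open>3\<close>. If
  \<open>v\<^sub>1, \<dots>, v\<^sub>m\<close> are independent over \<open>\<complex>[P, Q]\<close> and of degree \<open>\<le> D\<close>, then the products
  \<open>P\<^sup>i Q\<^sup>n v\<^sub>k\<close> with \<open>2i + 3n \<le> 6K\<close> are \<open>\<complex>\<close>-linearly independent of degree \<open>\<le> 6K + D\<close>;
  comparing with the dimension of that space gives \<open>3mK\<^sup>2 \<lesssim> 18K\<^sup>2\<close>, i.e. \<open>m \<le> 6\<close>.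

  Lower bound: on a line \<open>y = l x\<close> where \<open>P\<close> vanishes, rescaled so that \<open>Q\<close> becomes \<open>x\<^sup>3\<close>,
  an element \<open>F(P, Q)\<close> of \<open>\<complex>[P, Q]\<close> restricts to \<open>F(0, x\<^sup>3)\<close>, while \<open>W = P\<^sub>7 + c P\<^sub>3 P\<^sub>4\<close> and
  \<open>V = P\<^sub>6\<close> restrict to monomials of degrees \<open>7\<close> and \<open>6\<close>. Hence in a relation
  \<open>\<Sum> F\<^sub>i\<^sub>j(P, Q) W\<^sup>i V\<^sup>j = 0\<close> (\<open>i < 3\<close>, \<open>j < 2\<close>) the residues of the degrees mod 3 separate \<open>i\<close>,
  and the two lines on which \<open>P\<close> vanishes separate \<open>j\<close>, because \<open>P\<^sub>6 / P\<^sub>3\<^sup>2\<close> takes different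
  values there. So every \<open>F\<^sub>i\<^sub>j(0, t)\<close> vanishes, \<open>P\<close> divides the relation, and descent on the
  degree in \<open>P\<close> makes the relation trivial.\<close>

section \<open>Substitution of \<open>(P, Q)\<close>\<close>

lemma cst_0 [simp]: "cst 0 = 0" by (simp add: cst_def)
lemma cst_1 [simp]: "cst 1 = 1" by (simp add: cst_def one_pCons)
lemma cst_add: "cst (c + d) = cst c + cst d" by (simp add: cst_def)
lemma cst_mult: "cst (c * d) = cst c * cst d" by (simp add: cst_def)
lemma cst_uminus: "cst (- c) = - cst c" by (simp add: cst_def)

lemma map_poly_add_hom:
  assumes "f 0 = 0" "\<And>x y. f (x + y) = f x + f y"
  shows "map_poly f (p + q) = map_poly f p + map_poly f q"
  by (intro poly_eqI) (simp add: coeff_map_poly assms)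

lemma map_poly_mult_hom:
  fixes f :: "'a::comm_semiring_1 \<Rightarrow> 'b::comm_semiring_1"
  assumes "f 0 = 0" "\<And>x y. f (x + y) = f x + f y" "\<And>x y. f (x * y) = f x * f y"
  shows "map_poly f (p * q) = map_poly f p * map_poly f q"
proof -
  have f_sum: "f (sum g A) = (\<Sum>x\<in>A. f (g x))" for g :: "nat \<Rightarrow> 'a" and A
    by (induct A rule: infinite_finite_induct) (simp_all add: assms)
  show ?thesis
    by (intro poly_eqI) (simp add: coeff_map_poly assms coeff_mult f_sum)
qed

definition subst1 :: "complex poly poly \<Rightarrow> complex poly \<Rightarrow> complex poly poly" where
  "subst1 Q g = poly (map_poly cst g) Q"

lemma subst1_add: "subst1 Q (g + h) = subst1 Q g + subst1 Q h"
  by (simp add: subst1_def map_poly_add_hom cst_add)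

lemma subst1_mult: "subst1 Q (g * h) = subst1 Q g * subst1 Q h"
  by (simp add: subst1_def map_poly_mult_hom cst_add cst_mult)

lemma subst1_0 [simp]: "subst1 Q 0 = 0"
  by (simp add: subst1_def)

lemma subst1_pCons: "subst1 Q (pCons c g) = cst c + Q * subst1 Q g"
  by (simp add: subst1_def map_poly_pCons)

lemma subst1_const [simp]: "subst1 Q [:c:] = cst c"
  by (simp add: subst1_pCons)

lemma subst1_1 [simp]: "subst1 Q 1 = 1"
  by (simp add: one_pCons)

lemma subst1_monom: "subst1 Q (monom c n) = cst c * Q ^ n"
  by (induct n) (simp_all add: monom_0 monom_Suc subst1_pCons)

definition subst2 :: "complex poly poly \<Rightarrow> complex poly poly \<Rightarrow> complex poly poly \<Rightarrow> complex poly poly" where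
  "subst2 P Q F = poly (map_poly (subst1 Q) F) P"

lemma subst2_add: "subst2 P Q (F + G) = subst2 P Q F + subst2 P Q G"
  by (simp add: subst2_def map_poly_add_hom subst1_add)

lemma subst2_mult: "subst2 P Q (F * G) = subst2 P Q F * subst2 P Q G"
  by (simp add: subst2_def map_poly_mult_hom subst1_add subst1_mult)

lemma subst2_0 [simp]: "subst2 P Q 0 = 0"
  by (simp add: subst2_def)

lemma subst2_pCons: "subst2 P Q (pCons g F) = subst1 Q g + P * subst2 P Q F"
  by (simp add: subst2_def map_poly_pCons)

lemma subst2_sum: "subst2 P Q (sum F A) = (\<Sum>x\<in>A. subst2 P Q (F x))"
  by (induct A rule: infinite_finite_induct) (simp_all add: subst2_add)

lemma subst2_monom: "subst2 P Q (monom g i) = subst1 Q g * P ^ i"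
  by (induct i) (simp_all add: monom_0 monom_Suc subst2_pCons)

lemma subalg_0: "0 \<in> subalg G"
  using subalg.const[of 0 G] by simp

lemma subalg_1: "1 \<in> subalg G"
  using subalg.const[of 1 G] by simp

lemma subalg_power: "p \<in> subalg G \<Longrightarrow> p ^ n \<in> subalg G"
  by (induct n) (simp_all add: subalg_1 subalg.mult)

lemma subalg_pair_eq_range_subst2: "subalg {P, Q} = range (subst2 P Q)"
proof
  show "subalg {P, Q} \<subseteq> range (subst2 P Q)"
  proof
    fix p assume "p \<in> subalg {P, Q}"
    then show "p \<in> range (subst2 P Q)"
    proof (induct rule: subalg.induct)
      case (const c)
      show ?case by (rule range_eqI[where x = "[:[:c:]:]"]) (simp add: subst2_pCons)
    next
      case (gen g)
      then consider "g = P" | "g = Q" by blast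
      then show ?case
      proof cases
        case 1
        show ?thesis by (rule range_eqI[where x = "[:0, 1:]"]) (simp add: 1 subst2_pCons)
      next
        case 2
        show ?thesis by (rule range_eqI[where x = "[:[:0, 1:]:]"]) (simp add: 2 subst2_pCons subst1_pCons)
      qed
    next
      case (add p q)
      then obtain F G where "p = subst2 P Q F" "q = subst2 P Q G" by blast
      then show ?case by (intro range_eqI[where x = "F + G"]) (simp add: subst2_add)
    next
      case (mult p q)
      then obtain F G where "p = subst2 P Q F" "q = subst2 P Q G" by blast
      then show ?case by (intro range_eqI[where x = "F * G"]) (simp add: subst2_mult)
    qed
  qed
next
  have subst1_in: "subst1 Q g \<in> subalg {P, Q}" for g
    by (induct g) (auto simp: subst1_pCons intro: subalg.intros subalg_0)
  show "range (subst2 P Q) \<subseteq> subalg {P, Q}"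
  proof clarify
    fix F show "subst2 P Q F \<in> subalg {P, Q}"
      by (induct F) (auto simp: subst2_pCons intro: subalg.intros subalg_0 subst1_in)
  qed
qed

lemma coeff_pcompose_monom:
  fixes p :: "'a::comm_semiring_1 poly"
  assumes "n > 0"
  shows "coeff (pcompose p (monom 1 n)) k = (if n dvd k then coeff p (k div n) else 0)"
proof (induct p arbitrary: k)
  case 0
  then show ?case by simp
next
  case (pCons c p)
  have expand: "coeff (pcompose (pCons c p) (monom 1 n)) k
      = (if k = 0 then c else 0) + (if n \<le> k then coeff (pcompose p (monom 1 n)) (k - n) else 0)"
    using assms by (cases k) (auto simp: pcompose_pCons coeff_monom_mult)
  show ?case
  proof (cases "n \<le> k")
    case True
    then obtain m where k: "k = m + n" by (metis le_add_diff_inverse2)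
    have "k \<noteq> 0" using assms k by simp
    moreover have "n dvd k \<longleftrightarrow> n dvd m" by (simp add: k)
    moreover have "k div n = Suc (m div n)" using assms by (simp add: k)
    ultimately show ?thesis
      unfolding expand using True assms pCons(2)[of m] by (simp add: k)
  next
    case False
    then show ?thesis using assms by (auto simp: expand dest: dvd_imp_le)
  qed
qed

lemma pcompose_monom_monom:
  fixes c :: "'a::comm_semiring_1"
  assumes "n > 0"
  shows "pcompose (monom c m) (monom 1 n) = monom c (n * m)"
proof (intro poly_eqI)
  fix k
  show "coeff (pcompose (monom c m) (monom 1 n)) k = coeff (monom c (n * m)) k"
    using assms by (cases "n dvd k") (auto simp: coeff_pcompose_monom coeff_monom)
qed

lemma pcompose_monom_residues_eq_0:
  fixes H :: "nat \<Rightarrow> 'a::comm_ring_1 poly"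
  assumes n: "n > 0" and sum0: "(\<Sum>r<n. monom 1 r * pcompose (H r) (monom 1 n)) = 0"
  shows "\<forall>r<n. H r = 0"
proof (intro allI impI poly_eqI)
  fix r k assume r: "r < n"
  have same_residue: "r' = r" if "r' < n" "r' \<le> n * k + r" "n dvd (n * k + r - r')" for r'
  proof -
    from that(3) obtain q where "n * k + r - r' = n * q" by blast
    then have "n * k + r = n * q + r'" using that(2) by simp
    then have "(n * k + r) mod n = (n * q + r') mod n" by simp
    then show ?thesis using r that(1) by simp
  qed
  have "0 = coeff (\<Sum>r'<n. monom 1 r' * pcompose (H r') (monom 1 n)) (n * k + r)"
    by (simp add: sum0)
  also have "\<dots> = (\<Sum>r'<n. if r' = r then coeff (H r) k else 0)"
    unfolding coeff_sum
  proof (rule sum.cong)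
    fix r' assume "r' \<in> {..<n}"
    then show "coeff (monom 1 r' * pcompose (H r') (monom 1 n)) (n * k + r)
        = (if r' = r then coeff (H r) k else 0)"
      using same_residue n by (auto simp: coeff_monom_mult coeff_pcompose_monom)
  qed simp
  also have "\<dots> = coeff (H r) k" using r by simp
  finally show "coeff (H r) k = coeff 0 k" by simp
qed

lemma eq_0_by_descent:
  fixes F :: "'i \<Rightarrow> 'a::zero poly"
  assumes "finite I" and "R F"
    and step: "\<And>F. R F \<Longrightarrow> \<exists>G. R G \<and> (\<forall>k\<in>I. F k = pCons 0 (G k))"
  shows "\<forall>k\<in>I. F k = 0"
proof -
  have "\<forall>k\<in>I. F k = 0" if "R F" "\<forall>k\<in>I. degree (F k) \<le> N" for N F
    using that
  proof (induct N arbitrary: F)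
    case 0
    from step[OF 0(1)] obtain G where "\<forall>k\<in>I. F k = pCons 0 (G k)" by blast
    with 0(2) show ?case by (auto split: if_splits)
  next
    case (Suc N)
    from step[OF Suc.prems(1)] obtain G where "R G" and G: "\<forall>k\<in>I. F k = pCons 0 (G k)"
      by blast
    have "\<forall>k\<in>I. degree (G k) \<le> N"
      using Suc.prems(2) G by (auto split: if_splits)
    with Suc.hyps[OF \<open>R G\<close>] G show ?case by simp
  qed
  from this[OF assms(2), of "Max ((\<lambda>k. degree (F k)) ` I)"] show ?thesis
    using assms(1) by simp
qed

lemma pCons_0_synthetic_div: "coeff p 0 = 0 \<Longrightarrow> pCons 0 (synthetic_div p 0) = p"
  using synthetic_div_correct[of p 0] by (simp add: poly_0_coeff_0)

lemma quadratic_vieta: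
  fixes A B C l1 l2 :: "'a::idom"
  assumes "l1 \<noteq> l2" and "A * l1 ^ 2 + B * l1 + C = 0" and "A * l2 ^ 2 + B * l2 + C = 0"
  shows "A * (l1 + l2) = - B" and "A * (l1 * l2) = C"
proof -
  have "(l1 - l2) * (A * (l1 + l2) + B) = (A * l1 ^ 2 + B * l1 + C) - (A * l2 ^ 2 + B * l2 + C)"
    by (simp add: power2_eq_square algebra_simps)
  also have "\<dots> = 0" using assms(2,3) by simp
  finally have "(l1 - l2) * (A * (l1 + l2) + B) = 0" .
  with assms(1) show sum: "A * (l1 + l2) = - B" by (simp add: add_eq_0_iff2)
  have "C = - A * l1 ^ 2 - B * l1" using assms(2) by (simp add: eq_neg_iff_add_eq_0 algebra_simps)
  also have "\<dots> = A * (l1 * l2)"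
  proof -
    have B: "B = - (A * (l1 + l2))" using sum by simp
    show ?thesis unfolding B by (simp add: power2_eq_square algebra_simps)
  qed
  finally show "A * (l1 * l2) = C" ..
qed

lemma quadratic_two_roots:
  fixes A B C :: complex
  assumes "A \<noteq> 0" and "B ^ 2 \<noteq> 4 * A * C"
  shows "\<exists>l1 l2. l1 \<noteq> l2 \<and> A * l1 ^ 2 + B * l1 + C = 0 \<and> A * l2 ^ 2 + B * l2 + C = 0"
proof -
  define r where "r = csqrt (B ^ 2 - 4 * A * C)"
  have r: "r ^ 2 = B ^ 2 - 4 * A * C" and "r \<noteq> 0"
    using assms(2) by (auto simp: r_def)
  have root: "A * l ^ 2 + B * l + C = 0" if "2 * A * l + B = r \<or> 2 * A * l + B = - r" for l
  proof -
    have "4 * A * (A * l ^ 2 + B * l + C) = (2 * A * l + B) ^ 2 - r ^ 2"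
      unfolding r by (simp add: power2_eq_square algebra_simps)
    also have "\<dots> = 0" using that by (auto simp: power2_eq_square)
    finally show ?thesis using assms(1) by simp
  qed
  show ?thesis
  proof (intro exI conjI)
    show "(- B + r) / (2 * A) \<noteq> (- B - r) / (2 * A)" using \<open>r \<noteq> 0\<close> assms(1)
      by (simp add: divide_simps)
    show "A * ((- B + r) / (2 * A)) ^ 2 + B * ((- B + r) / (2 * A)) + C = 0"
      using assms(1) by (intro root) simp
    show "A * ((- B - r) / (2 * A)) ^ 2 + B * ((- B - r) / (2 * A)) + C = 0"
      using assms(1) by (intro root) simp
  qed
qed

lemma ex_complex_nth_root: "n > 0 \<Longrightarrow> \<exists>z::complex. z ^ n = c"
proof (cases "c = 0")
  case False
  assume "n > 0"
  then have "card {z::complex. z ^ n = c} = n" by (rule card_nth_roots[OF False])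
  with \<open>n > 0\<close> show ?thesis by (metis (mono_tags) Collect_empty_eq card.empty less_irrefl)
qed simp

lemma avoid_two_zeros:
  fixes A1 B1 A2 B2 :: "'a::field_char_0"
  assumes "A1 \<noteq> 0 \<or> B1 \<noteq> 0" and "A2 \<noteq> 0 \<or> B2 \<noteq> 0"
  shows "\<exists>c. A1 + c * B1 \<noteq> 0 \<and> A2 + c * B2 \<noteq> 0"
proof (rule ccontr)
  assume "\<not> ?thesis"
  then have "A1 + c * B1 = 0 \<or> A2 + c * B2 = 0" for c by blast
  from this[of 0] this[of 1] this[of 2] assms show False
    by (auto simp: algebra_simps) (simp_all add: eq_neg_iff_add_eq_0[symmetric])
qed

section \<open>Restriction to lines through the origin\<close>

text \<open>\<open>restrict_line s l f\<close> is \<open>f(s t, l s t)\<close> as a polynomial in \<open>t\<close>.\<close>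
definition restrict_line :: "complex \<Rightarrow> complex \<Rightarrow> complex poly poly \<Rightarrow> complex poly" where
  "restrict_line s l f = pcompose (poly f [:0, l:]) [:0, s:]"

lemma restrict_line_0 [simp]: "restrict_line s l 0 = 0"
  by (simp add: restrict_line_def)

lemma restrict_line_1 [simp]: "restrict_line s l 1 = 1"
  by (simp add: restrict_line_def pcompose_1)

lemma restrict_line_uminus: "restrict_line s l (- f) = - restrict_line s l f"
  by (simp add: restrict_line_def pcompose_uminus)

lemma restrict_line_add: "restrict_line s l (f + g) = restrict_line s l f + restrict_line s l g"
  by (simp add: restrict_line_def pcompose_add)

lemma restrict_line_diff: "restrict_line s l (f - g) = restrict_line s l f - restrict_line s l g"
  by (simp add: restrict_line_def pcompose_diff)

lemma restrict_line_mult: "restrict_line s l (f * g) = restrict_line s l f * restrict_line s l g"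
  by (simp add: restrict_line_def pcompose_mult)

lemma restrict_line_power: "restrict_line s l (f ^ n) = restrict_line s l f ^ n"
  by (induct n) (simp_all add: restrict_line_mult)

lemma restrict_line_sum: "restrict_line s l (sum f A) = (\<Sum>x\<in>A. restrict_line s l (f x))"
  by (simp add: restrict_line_def poly_sum pcompose_sum)

lemma restrict_line_cst [simp]: "restrict_line s l (cst c) = [:c:]"
  by (simp add: restrict_line_def cst_def)

lemma restrict_line_subst1: "restrict_line s l (subst1 Q g) = pcompose g (restrict_line s l Q)"
  by (induct g) (simp_all add: subst1_pCons restrict_line_add restrict_line_mult pcompose_pCons)

lemma restrict_line_subst2:
  assumes "restrict_line s l P = 0"
  shows "restrict_line s l (subst2 P Q F) = pcompose (coeff F 0) (restrict_line s l Q)"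
  by (cases F) (simp add: subst2_pCons restrict_line_add restrict_line_mult assms restrict_line_subst1)

definition Pgen_on_line :: "complex \<Rightarrow> complex \<Rightarrow> complex \<Rightarrow> nat \<Rightarrow> complex" where
  "Pgen_on_line a b l i = a + b * l ^ i + (- a - b * l) ^ i"

lemma restrict_line_Pgen: "restrict_line s l (Pgen a b i) = monom (Pgen_on_line a b l i * s ^ i) i"
proof -
  have linear_power: "[:0, c:] ^ i = monom (c ^ i) i" for c :: complex
    by (induct i) (simp_all add: monom_0 monom_Suc smult_monom)
  have "restrict_line s l varX = [:0, s:]" "restrict_line s l varY = [:0, l * s:]"
    by (simp_all add: restrict_line_def varX_def varY_def pcompose_pCons)
  then have "restrict_line s l (Pgen a b i)
      = [:a:] * [:0, s:] ^ i + [:b:] * [:0, l * s:] ^ i + [:0, (- a - b * l) * s:] ^ i"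
    by (simp add: Pgen_def restrict_line_add restrict_line_diff restrict_line_mult
        restrict_line_power restrict_line_uminus algebra_simps)
  also have "\<dots> = monom (Pgen_on_line a b l i * s ^ i) i"
    by (simp add: linear_power smult_monom add_monom Pgen_on_line_def power_mult_distrib
        distrib_right)
  finally show ?thesis .
qed

lemma power_recurrence_of_cubic_root:
  fixes t r1 r2 r3 :: "'a::comm_ring_1"
  assumes "(t - r1) * (t - r2) * (t - r3) = 0"
  shows "t ^ (n + 3) = (r1 + r2 + r3) * t ^ (n + 2) - (r1 * r2 + r1 * r3 + r2 * r3) * t ^ (n + 1)
    + r1 * r2 * r3 * t ^ n"
proof -
  have "t ^ (n + 3) - ((r1 + r2 + r3) * t ^ (n + 2) - (r1 * r2 + r1 * r3 + r2 * r3) * t ^ (n + 1)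
      + r1 * r2 * r3 * t ^ n) = t ^ n * ((t - r1) * (t - r2) * (t - r3))"
    by (simp add: power_add algebra_simps power2_eq_square power3_eq_cube)
  then show ?thesis using assms by simp
qed

lemma Pgen_on_line_recurrence:
  fixes a b l :: complex
  defines "m \<equiv> - a - b * l"
  shows "Pgen_on_line a b l (n + 3) = (1 + l + m) * Pgen_on_line a b l (n + 2)
    - (l + m + l * m) * Pgen_on_line a b l (n + 1) + l * m * Pgen_on_line a b l n"
proof -
  have root: "t ^ (n + 3) = (1 + l + m) * t ^ (n + 2) - (l + m + l * m) * t ^ (n + 1) + l * m * t ^ n"
    if "t = 1 \<or> t = l \<or> t = m" for t
    using power_recurrence_of_cubic_root[of t 1 l m n] that by auto
  show ?thesis
    unfolding Pgen_on_line_def m_def[symmetric]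
    using root[of 1] root[of l] root[of m] by (simp add: algebra_simps)
qed

lemma Pgen_on_line_values:
  fixes a b l :: complex
  defines "m \<equiv> - a - b * l"
  defines "e1 \<equiv> 1 + l + m" and "e2 \<equiv> l + m + l * m" and "e3 \<equiv> l * m"
  assumes P2: "Pgen_on_line a b l 2 = 0"
  shows "Pgen_on_line a b l 3 = e3 * (a + b + 1)"
    and "Pgen_on_line a b l 4 = e1 * e3 * (a + b + 1)"
    and "Pgen_on_line a b l 6 = (e1 ^ 3 - 2 * e1 * e2 + e3) * e3 * (a + b + 1)"
    and "Pgen_on_line a b l 7 = (e1 ^ 4 - 3 * e1 ^ 2 * e2 + 2 * e1 * e3 + e2 ^ 2) * e3 * (a + b + 1)"
proof -
  have rec: "Pgen_on_line a b l (n + 3)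
      = e1 * Pgen_on_line a b l (n + 2) - e2 * Pgen_on_line a b l (n + 1) + e3 * Pgen_on_line a b l n"
    for n unfolding e1_def e2_def e3_def m_def by (rule Pgen_on_line_recurrence)
  let ?P = "Pgen_on_line a b l"
  have P0: "?P 0 = a + b + 1" and P1: "?P 1 = 0"
    by (simp_all add: Pgen_on_line_def)
  have rec3: "?P 3 = e1 * ?P 2 - e2 * ?P 1 + e3 * ?P 0" using rec[of 0] by (simp add: eval_nat_numeral)
  have rec4: "?P 4 = e1 * ?P 3 - e2 * ?P 2 + e3 * ?P 1" using rec[of 1] by (simp add: eval_nat_numeral)
  have rec5: "?P 5 = e1 * ?P 4 - e2 * ?P 3 + e3 * ?P 2" using rec[of 2] by (simp add: eval_nat_numeral)
  have rec6: "?P 6 = e1 * ?P 5 - e2 * ?P 4 + e3 * ?P 3" using rec[of 3] by (simp add: eval_nat_numeral)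
  have rec7: "?P 7 = e1 * ?P 6 - e2 * ?P 5 + e3 * ?P 4" using rec[of 4] by (simp add: eval_nat_numeral)
  show P3: "?P 3 = e3 * (a + b + 1)" using rec3 P0 P1 P2 by simp
  show P4: "?P 4 = e1 * e3 * (a + b + 1)" using rec4 P1 P2 P3 by simp
  have P5: "?P 5 = (e1 ^ 2 - e2) * e3 * (a + b + 1)" using rec5 P2 P3 P4
    by (simp add: algebra_simps power2_eq_square)
  show P6: "?P 6 = (e1 ^ 3 - 2 * e1 * e2 + e3) * e3 * (a + b + 1)" using rec6 P3 P4 P5
    by (simp add: algebra_simps power2_eq_square power3_eq_cube)
  show "?P 7 = (e1 ^ 4 - 3 * e1 ^ 2 * e2 + 2 * e1 * e3 + e2 ^ 2) * e3 * (a + b + 1)"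
    using rec7 P4 P5 P6 by (simp add: algebra_simps power2_eq_square power3_eq_cube power4_eq_xxxx)
qed

lemma Pgen_on_line_2: "Pgen_on_line a b l 2 = (b + b ^ 2) * l ^ 2 + 2 * a * b * l + (a + a ^ 2)"
  by (simp add: Pgen_on_line_def power2_eq_square algebra_simps)

section \<open>Six elements independent over \<open>\<complex>[P, Q]\<close>\<close>

lemma subst2_eq_0_imp_eq_0:
  assumes "P \<noteq> 0" and "restrict_line s l P = 0" and "degree (restrict_line s l Q) > 0"
    and "subst2 P Q F = 0"
  shows "F = 0"
  using assms(4)
proof (induct F)
  case (pCons g F)
  have "pcompose g (restrict_line s l Q) = 0"
    using arg_cong[OF pCons.prems, of "restrict_line s l"] restrict_line_subst2[OF assms(2)]
    by simp
  then have "g = 0" using assms(3) by (simp add: pcompose_eq_0)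
  with pCons.prems assms(1) have "subst2 P Q F = 0" by (simp add: subst2_pCons)
  with pCons.hyps(2) \<open>g = 0\<close> show ?case by simp
qed simp

lemma restricted_relation_coeffs:
  fixes F :: "nat \<Rightarrow> complex poly poly"
  assumes line: "restrict_line s l P = 0" "restrict_line s l Q = monom 1 3"
      "restrict_line s l W = monom w 7" "restrict_line s l V = monom u 6"
    and "w \<noteq> 0"
    and rel: "(\<Sum>i<3. (subst2 P Q (F (2 * i)) + subst2 P Q (F (2 * i + 1)) * V) * W ^ i) = 0"
  shows "\<forall>i<3. coeff (F (2 * i)) 0 + monom u 2 * coeff (F (2 * i + 1)) 0 = 0"
proof -
  text \<open>As \<open>7 \<equiv> 1\<close> and \<open>6 \<equiv> 0 (mod 3)\<close>, the \<open>i\<close>-th summand restricts to degrees \<open>\<equiv> i (mod 3)\<close>.\<close>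
  define H where "H i = monom (w ^ i) (2 * i) * (coeff (F (2 * i)) 0 + monom u 2 * coeff (F (2 * i + 1)) 0)"
    for i
  have summand: "restrict_line s l ((subst2 P Q (F (2 * i)) + subst2 P Q (F (2 * i + 1)) * V) * W ^ i)
      = monom 1 i * pcompose (H i) (monom 1 3)" for i
  proof -
    let ?g0 = "pcompose (coeff (F (2 * i)) 0) (monom 1 3)"
      and ?g1 = "pcompose (coeff (F (2 * i + 1)) 0) (monom 1 3)"
    have "monom 1 i * pcompose (H i) (monom 1 3)
        = monom 1 i * monom (w ^ i) (6 * i) * (?g0 + monom u 6 * ?g1)"
      by (simp add: H_def pcompose_mult pcompose_add pcompose_monom_monom mult.assoc)
    also have "\<dots> = (?g0 + ?g1 * monom u 6) * monom (w ^ i) (7 * i)"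
      by (simp add: mult_monom mult.commute)
    also have "\<dots> = restrict_line s l ((subst2 P Q (F (2 * i)) + subst2 P Q (F (2 * i + 1)) * V) * W ^ i)"
      by (simp add: line restrict_line_add restrict_line_mult restrict_line_power restrict_line_subst2
          monom_power mult.commute)
    finally show ?thesis ..
  qed
  have "0 = restrict_line s l (\<Sum>i<3. (subst2 P Q (F (2 * i)) + subst2 P Q (F (2 * i + 1)) * V) * W ^ i)"
    unfolding rel by simp
  also have "\<dots> = (\<Sum>i<3. monom 1 i * pcompose (H i) (monom 1 3))"
    by (simp only: restrict_line_sum summand)
  finally have "\<forall>i<3. H i = 0" using pcompose_monom_residues_eq_0[of 3 H] by simp
  then show ?thesis using \<open>w \<noteq> 0\<close> by (simp add: H_def)
qed

definition basis6 :: "complex poly poly \<Rightarrow> complex poly poly \<Rightarrow> complex poly poly list" where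
  "basis6 W V = [1, V, W, W * V, W ^ 2, W ^ 2 * V]"

lemma length_basis6 [simp]: "length (basis6 W V) = 6"
  by (simp add: basis6_def)

lemma sum_basis6:
  "(\<Sum>k<6. c k * basis6 W V ! k) = (\<Sum>i<3. (c (2 * i) + c (2 * i + 1) * V) * W ^ i)"
proof -
  have six: "(\<Sum>k<6. f k) = f 0 + f 1 + f 2 + f 3 + f 4 + f (5::nat)"
    and three: "(\<Sum>i<3. f i) = f 0 + f 1 + f (2::nat)" for f :: "nat \<Rightarrow> complex poly poly"
    by (simp_all add: eval_nat_numeral)
  show ?thesis unfolding six three by (simp add: basis6_def algebra_simps eval_nat_numeral)
qed

locale separating_lines =
  fixes P Q W V :: "complex poly poly" and s1 l1 u1 w1 s2 l2 u2 w2 :: complex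
  assumes P_nz: "P \<noteq> 0"
    and line1: "restrict_line s1 l1 P = 0" "restrict_line s1 l1 Q = monom 1 3"
      "restrict_line s1 l1 W = monom w1 7" "restrict_line s1 l1 V = monom u1 6"
    and line2: "restrict_line s2 l2 P = 0" "restrict_line s2 l2 Q = monom 1 3"
      "restrict_line s2 l2 W = monom w2 7" "restrict_line s2 l2 V = monom u2 6"
    and w1_nz: "w1 \<noteq> 0" and w2_nz: "w2 \<noteq> 0" and u1_ne_u2: "u1 \<noteq> u2"
begin

definition basis6_relation :: "(nat \<Rightarrow> complex poly poly) \<Rightarrow> bool" where
  "basis6_relation F \<longleftrightarrow> (\<Sum>i<3. (subst2 P Q (F (2 * i)) + subst2 P Q (F (2 * i + 1)) * V) * W ^ i) = 0"

lemma basis6_relation_coeff_0: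
  assumes "basis6_relation F" and "k < 6"
  shows "coeff (F k) 0 = 0"
proof -
  define i where "i = k div 2"
  let ?g0 = "coeff (F (2 * i)) 0" and ?g1 = "coeff (F (2 * i + 1)) 0"
  have "i < 3" using \<open>k < 6\<close> by (simp add: i_def)
  then have g1: "?g0 + monom u1 2 * ?g1 = 0" and g2: "?g0 + monom u2 2 * ?g1 = 0"
    using restricted_relation_coeffs[OF line1 w1_nz] restricted_relation_coeffs[OF line2 w2_nz]
      assms(1) by (simp_all add: basis6_relation_def)
  have "monom (u1 - u2) 2 * ?g1 = (?g0 + monom u1 2 * ?g1) - (?g0 + monom u2 2 * ?g1)"
    by (simp add: diff_monom[symmetric] algebra_simps)
  then have "monom (u1 - u2) 2 * ?g1 = 0" by (simp only: g1 g2 diff_self)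
  then have "?g1 = 0" and "?g0 = 0"
    using u1_ne_u2 g1 by simp_all
  moreover have "k = 2 * i \<or> k = 2 * i + 1" by (simp add: i_def) presburger
  ultimately show ?thesis by auto
qed

lemma basis6_relation_descent:
  assumes "basis6_relation F"
  shows "\<exists>G. basis6_relation G \<and> (\<forall>k\<in>{..<6}. F k = pCons 0 (G k))"
proof (intro exI conjI)
  define G where "G k = synthetic_div (F k) 0" for k
  show F: "\<forall>k\<in>{..<6}. F k = pCons 0 (G k)"
    using basis6_relation_coeff_0[OF assms] by (simp add: G_def pCons_0_synthetic_div)
  have "P * (\<Sum>i<3. (subst2 P Q (G (2 * i)) + subst2 P Q (G (2 * i + 1)) * V) * W ^ i)
      = (\<Sum>i<3. (subst2 P Q (F (2 * i)) + subst2 P Q (F (2 * i + 1)) * V) * W ^ i)"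
    unfolding sum_distrib_left
    by (intro sum.cong) (simp_all add: F subst2_pCons algebra_simps)
  with assms P_nz show "basis6_relation G" by (simp add: basis6_relation_def)
qed

lemma basis6_independent: "lin_indep_over (subalg {P, Q}) (basis6 W V)"
  unfolding lin_indep_over_def
proof (intro allI impI)
  fix cs
  assume len: "length cs = length (basis6 W V)" and sub: "set cs \<subseteq> subalg {P, Q}"
    and sum0: "(\<Sum>k<length (basis6 W V). cs ! k * basis6 W V ! k) = 0"
  define F where "F k = inv (subst2 P Q) (cs ! k)" for k
  have cs: "cs ! k = subst2 P Q (F k)" if "k < 6" for k
    using sub len that unfolding F_def subalg_pair_eq_range_subst2
    by (metis f_inv_into_f length_basis6 nth_mem subsetD)
  have "basis6_relation F"
    using sum0 by (simp add: basis6_relation_def sum_basis6 cs[symmetric])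
  then have "\<forall>k\<in>{..<6}. F k = 0"
    using eq_0_by_descent[of "{..<6}" basis6_relation F] basis6_relation_descent by blast
  then show "\<forall>c\<in>set cs. c = 0"
    using len by (auto simp: in_set_conv_nth cs)
qed

end

section \<open>At most six elements independent over \<open>\<complex>[P, Q]\<close>\<close>

definition total_degree_le :: "nat \<Rightarrow> complex poly poly \<Rightarrow> bool" where
  "total_degree_le M f \<longleftrightarrow> (\<forall>i j. coeff (coeff f j) i \<noteq> 0 \<longrightarrow> i + j \<le> M)"

lemma total_degree_le_mono: "total_degree_le M f \<Longrightarrow> M \<le> M' \<Longrightarrow> total_degree_le M' f"
  unfolding total_degree_le_def by force

lemma total_degree_le_add: "total_degree_le M f \<Longrightarrow> total_degree_le M g \<Longrightarrow> total_degree_le M (f + g)"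
  unfolding total_degree_le_def by (metis add.right_neutral coeff_add)

lemma total_degree_le_uminus: "total_degree_le M f \<Longrightarrow> total_degree_le M (- f)"
  unfolding total_degree_le_def by simp

lemma total_degree_le_diff: "total_degree_le M f \<Longrightarrow> total_degree_le M g \<Longrightarrow> total_degree_le M (f - g)"
  using total_degree_le_add[of M f "- g"] total_degree_le_uminus[of M g] by simp

lemma total_degree_le_mult:
  assumes f: "total_degree_le M f" and g: "total_degree_le N g"
  shows "total_degree_le (M + N) (f * g)"
  unfolding total_degree_le_def
proof (intro allI impI)
  fix i j assume nz: "coeff (coeff (f * g) j) i \<noteq> 0"
  have "coeff (coeff (f * g) j) i
      = (\<Sum>j1\<le>j. \<Sum>i1\<le>i. coeff (coeff f j1) i1 * coeff (coeff g (j - j1)) (i - i1))"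
    by (simp add: coeff_mult coeff_sum)
  with nz obtain i1 j1 where "i1 \<le> i" "j1 \<le> j"
    and "coeff (coeff f j1) i1 * coeff (coeff g (j - j1)) (i - i1) \<noteq> 0"
    by (metis (no_types, lifting) atMost_iff sum.neutral)
  then have "coeff (coeff f j1) i1 \<noteq> 0" "coeff (coeff g (j - j1)) (i - i1) \<noteq> 0" by auto
  with f g have "i1 + j1 \<le> M" "(i - i1) + (j - j1) \<le> N"
    unfolding total_degree_le_def by blast+
  with \<open>i1 \<le> i\<close> \<open>j1 \<le> j\<close> show "i + j \<le> M + N" by linarith
qed

lemma total_degree_le_power: "total_degree_le M f \<Longrightarrow> total_degree_le (n * M) (f ^ n)"
proof (induct n)
  case 0
  then show ?case by (simp add: total_degree_le_def coeff_1)
next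
  case (Suc n)
  then show ?case using total_degree_le_mult[of M f "n * M" "f ^ n"] by simp
qed

lemma total_degree_le_Pgen: "total_degree_le i (Pgen a b i)"
proof -
  have cst: "total_degree_le 0 (cst c)" for c
    by (simp add: total_degree_le_def cst_def coeff_pCons split: nat.split)
  have X: "total_degree_le 1 varX" and Y: "total_degree_le 1 varY"
    by (simp_all add: total_degree_le_def varX_def varY_def coeff_pCons split: nat.split)
  have "total_degree_le 1 (- (cst a * varX) - cst b * varY)"
    using total_degree_le_mult[OF cst[of a] X] total_degree_le_mult[OF cst[of b] Y]
    by (intro total_degree_le_diff total_degree_le_uminus) simp_all
  then show ?thesis
    using total_degree_le_mult[OF cst[of a] total_degree_le_power[OF X, of i]]
      total_degree_le_mult[OF cst[of b] total_degree_le_power[OF Y, of i]]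
      total_degree_le_power[of 1 _ i]
    by (simp add: Pgen_def total_degree_le_add)
qed

lemma total_degree_le_exists: "\<exists>M. total_degree_le M f"
proof -
  define M where "M = (\<Sum>j\<le>degree f. j + degree (coeff f j))"
  have "i + j \<le> M" if "coeff (coeff f j) i \<noteq> 0" for i j
  proof -
    from that have "j \<le> degree f" and "i \<le> degree (coeff f j)"
      by (auto intro: le_degree)
    then have "i + j \<le> j + degree (coeff f j)" by simp
    also have "\<dots> \<le> M"
      unfolding M_def using \<open>j \<le> degree f\<close>
      by (intro member_le_sum[where f = "\<lambda>j. j + degree (coeff f j)"]) auto
    finally show ?thesis .
  qed
  then show ?thesis unfolding total_degree_le_def by blast
qed

interpretation cst_vs: vector_space "\<lambda>c f. cst c * f"
  by unfold_locales (simp_all add: algebra_simps cst_add cst_mult)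

definition monomials_le :: "nat \<Rightarrow> complex poly poly set" where
  "monomials_le M = (\<lambda>(i, j). monom (monom 1 i) j) ` {(i, j). i + j \<le> M}"

lemma finite_exponents_le: "finite {(i, j :: nat). i + j \<le> M}"
  by (rule finite_subset[of _ "{..M} \<times> {..M}"]) auto

lemma finite_monomials_le: "finite (monomials_le M)"
  by (simp add: monomials_le_def finite_exponents_le)

lemma card_exponents_le: "2 * card {(i, j :: nat). i + j \<le> M} = (M + 1) * (M + 2)"
proof (induct M)
  case 0
  have "{(i, j :: nat). i + j \<le> 0} = {(0, 0)}" by auto
  then show ?case by simp
next
  case (Suc M)
  have split: "{(i, j). i + j \<le> Suc M} = {(i, j). i + j \<le> M} \<union> (\<lambda>i. (i, Suc M - i)) ` {..Suc M}"
    by (auto simp: image_iff intro!: bexI[of _ "fst p" for p])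
  have "card {(i, j). i + j \<le> Suc M} = card {(i, j :: nat). i + j \<le> M} + (M + 2)"
    unfolding split using finite_exponents_le
    by (subst card_Un_disjoint) (auto simp: card_image inj_on_def)
  then show ?case using Suc by (simp add: algebra_simps)
qed

lemma total_degree_le_in_span:
  assumes "total_degree_le M f"
  shows "f \<in> cst_vs.span (monomials_le M)"
proof -
  have "monom (monom (coeff (coeff f j) i) i) j \<in> cst_vs.span (monomials_le M)" for i j
  proof (cases "coeff (coeff f j) i = 0")
    case False
    with assms have "monom (monom 1 i) j \<in> monomials_le M"
      by (auto simp: total_degree_le_def monomials_le_def)
    then have "cst (coeff (coeff f j) i) * monom (monom 1 i) j \<in> cst_vs.span (monomials_le M)"
      by (intro cst_vs.span_scale cst_vs.span_base)
    moreover have "cst c * monom (monom 1 i) j = monom (monom c i) j" for c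
      by (simp add: cst_def smult_monom)
    ultimately show ?thesis by simp
  qed (simp add: cst_vs.span_zero)
  then have "(\<Sum>j\<le>degree f. monom (\<Sum>i\<le>degree (coeff f j). monom (coeff (coeff f j) i) i) j)
      \<in> cst_vs.span (monomials_le M)"
    by (simp add: monom_sum cst_vs.span_sum)
  then show ?thesis by (simp add: poly_as_sum_of_monoms)
qed

lemma card_le_if_combinations_trivial:
  assumes "finite T" and "finite B" and span: "x ` T \<subseteq> cst_vs.span B"
    and trivial: "\<And>u. (\<Sum>t\<in>T. cst (u t) * x t) = 0 \<Longrightarrow> \<forall>t\<in>T. u t = 0"
  shows "card T \<le> card B"
proof -
  have inj: "inj_on x T"
  proof (rule inj_onI, rule ccontr)
    fix t1 t2 assume t: "t1 \<in> T" "t2 \<in> T" and eq: "x t1 = x t2" and "t1 \<noteq> t2"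
    define u where "u t = (if t = t1 then 1 else if t = t2 then - 1 else (0::complex))" for t
    have "(\<Sum>t\<in>T. cst (u t) * x t)
        = (\<Sum>t\<in>T. (if t1 = t then x t1 else 0) + (if t2 = t then - x t2 else 0))"
      using \<open>t1 \<noteq> t2\<close> by (intro sum.cong) (auto simp: u_def cst_uminus)
    also have "\<dots> = 0" using t eq \<open>finite T\<close> by (simp add: sum.distrib)
    finally have "u t1 = 0" using trivial t by blast
    then show False by (simp add: u_def)
  qed
  have "cst_vs.independent (x ` T)"
  proof (rule cst_vs.independent_if_scalars_zero)
    show "finite (x ` T)" using \<open>finite T\<close> by simp
    fix f y
    assume "(\<Sum>y\<in>x ` T. cst (f y) * y) = 0" and "y \<in> x ` T"
    then show "f y = 0"
      using trivial[of "f \<circ> x"] by (auto simp: sum.reindex[OF inj])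
  qed
  with cst_vs.independent_span_bound[OF \<open>finite B\<close> _ span] inj show ?thesis
    by (simp add: card_image)
qed

text \<open>\<open>(j, i)\<close> stands for \<open>P\<^sup>i Q\<^bsup>2K - j\<^esup>\<close>; these are the monomials of weighted degree
  \<open>2i + 3(2K - j) \<le> 6K\<close>.\<close>
definition weighted_exponents :: "nat \<Rightarrow> (nat \<times> nat) set" where
  "weighted_exponents K = (SIGMA j:{..2 * K}. {..3 * j div 2})"

lemma finite_weighted_exponents: "finite (weighted_exponents K)"
  by (simp add: weighted_exponents_def)

lemma card_weighted_exponents: "card (weighted_exponents K) = 3 * K ^ 2 + 3 * K + 1"
proof -
  have "(\<Sum>j\<le>2 * K. 3 * j div 2 + 1) = 3 * K ^ 2 + 3 * K + 1"
  proof (induct K)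
    case (Suc K)
    have "3 * Suc (2 * K) div 2 = 3 * K + 1" and "3 * Suc (Suc (2 * K)) div 2 = 3 * K + 3"
      by presburger+
    with Suc show ?case by (simp add: power2_eq_square algebra_simps)
  qed simp
  then show ?thesis by (simp add: weighted_exponents_def card_SigmaI)
qed

lemma weighted_products_combinations_trivial:
  assumes alg_indep: "\<And>F. subst2 P Q F = 0 \<Longrightarrow> F = 0"
    and li: "lin_indep_over (subalg {P, Q}) vs"
    and sum0: "(\<Sum>(k, p)\<in>{..<length vs} \<times> weighted_exponents K.
      cst (u (k, p)) * (P ^ snd p * Q ^ (2 * K - fst p) * vs ! k)) = 0"
  shows "\<forall>t\<in>{..<length vs} \<times> weighted_exponents K. u t = 0"
proof -
  define G where "G k = (\<Sum>(j, i)\<in>weighted_exponents K. monom (monom (u (k, j, i)) (2 * K - j)) i)" for k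
  have "(\<Sum>k<length vs. subst2 P Q (G k) * vs ! k)
      = (\<Sum>k<length vs. \<Sum>p\<in>weighted_exponents K. cst (u (k, p)) * (P ^ snd p * Q ^ (2 * K - fst p) * vs ! k))"
    by (simp add: G_def subst2_sum subst2_monom subst1_monom sum_distrib_left sum_distrib_right
        case_prod_beta mult_ac)
  also have "\<dots> = 0"
    using sum0 by (simp add: sum.cartesian_product)
  finally have sum_G: "(\<Sum>k<length vs. subst2 P Q (G k) * vs ! k) = 0" .
  have "set (map (\<lambda>k. subst2 P Q (G k)) [0..<length vs]) \<subseteq> subalg {P, Q}"
    by (auto simp: subalg_pair_eq_range_subst2)
  then have "subst2 P Q (G k) = 0" if "k < length vs" for k
    using li sum_G that unfolding lin_indep_over_def
    by (auto elim!: allE[of _ "map (\<lambda>k. subst2 P Q (G k)) [0..<length vs]"])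
  then have G0: "G k = 0" if "k < length vs" for k using alg_indep that by blast
  show ?thesis
  proof clarify
    fix k j i assume k: "k < length vs" and ji: "(j, i) \<in> weighted_exponents K"
    have "0 = coeff (coeff (G k) i) (2 * K - j)" using G0[OF k] by simp
    also have "\<dots> = (\<Sum>p\<in>weighted_exponents K. if p = (j, i) then u (k, j, i) else 0)"
      unfolding G_def coeff_sum
    proof (rule sum.cong)
      fix p assume p: "p \<in> weighted_exponents K"
      have "fst p \<le> 2 * K" "j \<le> 2 * K" using p ji by (auto simp: weighted_exponents_def)
      then have "(snd p = i \<and> 2 * K - fst p = 2 * K - j) \<longleftrightarrow> p = (j, i)" by (cases p) auto
      then show "coeff (coeff (case p of (j', i') \<Rightarrow> monom (monom (u (k, j', i')) (2 * K - j')) i') i) (2 * K - j)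
          = (if p = (j, i) then u (k, j, i) else 0)"
        by (cases p) (auto simp: coeff_monom)
    qed simp
    also have "\<dots> = u (k, j, i)" using ji finite_weighted_exponents by simp
    finally show "u (k, j, i) = 0" ..
  qed
qed

lemma ex_total_degree_le_bound: "finite A \<Longrightarrow> \<exists>D. \<forall>f\<in>A. total_degree_le D f"
proof (induct A rule: finite_induct)
  case (insert f A)
  then obtain D where "\<forall>g\<in>A. total_degree_le D g" by blast
  moreover obtain M where "total_degree_le M f" using total_degree_le_exists by blast
  ultimately show ?case by (metis insert_iff max.cobounded1 max.cobounded2 total_degree_le_mono)
qed simp

lemma total_degree_le_weighted_product:
  assumes "total_degree_le 2 P" and "total_degree_le 3 Q" and "total_degree_le D v"
    and "(j, i) \<in> weighted_exponents K"
  shows "total_degree_le (6 * K + D) (P ^ i * Q ^ (2 * K - j) * v)"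
proof -
  have "i * 2 + (2 * K - j) * 3 \<le> 6 * K" using assms(4) by (auto simp: weighted_exponents_def)
  then have "total_degree_le (6 * K) (P ^ i * Q ^ (2 * K - j))"
    using total_degree_le_mult[OF total_degree_le_power[OF assms(1), of i]
        total_degree_le_power[OF assms(2), of "2 * K - j"]]
    by (metis total_degree_le_mono)
  then show ?thesis using total_degree_le_mult assms(3) by blast
qed

lemma length_le_6_if_lin_indep_over:
  assumes alg_indep: "\<And>F. subst2 P Q F = 0 \<Longrightarrow> F = 0"
    and P: "total_degree_le 2 P" and Q: "total_degree_le 3 Q"
    and li: "lin_indep_over (subalg {P, Q}) vs"
  shows "length vs \<le> 6"
proof (rule ccontr)
  assume "\<not> length vs \<le> 6"
  define m where "m = length vs"
  obtain D where vs_deg: "\<forall>v\<in>set vs. total_degree_le D v"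
    using ex_total_degree_le_bound[of "set vs"] by blast
  \<comment> \<open>large enough that \<open>14 (3K\<^sup>2 + 3K + 1) > (6K + D + 1) (6K + D + 2)\<close>\<close>
  define K where "K = 3 * D + 3"
  define T where "T = {..<m} \<times> weighted_exponents K"
  define x where "x = (\<lambda>(k, p). P ^ snd p * Q ^ (2 * K - fst p) * vs ! k)"
  have "x ` T \<subseteq> cst_vs.span (monomials_le (6 * K + D))"
    using total_degree_le_weighted_product[OF P Q] vs_deg
    by (auto simp: T_def x_def m_def intro!: total_degree_le_in_span)
  then have "card T \<le> card (monomials_le (6 * K + D))"
    using weighted_products_combinations_trivial[OF alg_indep li]
    by (intro card_le_if_combinations_trivial)
      (auto simp: T_def m_def x_def finite_weighted_exponents finite_monomials_le split_def)
  also have "\<dots> \<le> card {(i, j). i + j \<le> 6 * K + D}"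
    unfolding monomials_le_def using finite_exponents_le by (rule card_image_le)
  finally have "2 * (m * (3 * K ^ 2 + 3 * K + 1)) \<le> (6 * K + D + 1) * (6 * K + D + 2)"
    using card_exponents_le[of "6 * K + D"]
    by (simp add: T_def card_cartesian_product card_weighted_exponents)
  moreover have "7 * (3 * K ^ 2 + 3 * K + 1) \<le> m * (3 * K ^ 2 + 3 * K + 1)"
    using \<open>\<not> length vs \<le> 6\<close> by (intro mult_le_mono1) (simp add: m_def)
  ultimately show False by (simp add: K_def power2_eq_square algebra_simps)
qed

locale nondegenerate_ab =
  fixes a b :: complex
  assumes a_notin: "a \<notin> {0, -1}" and b_notin: "b \<notin> {0, -1}" and a_plus_b_notin: "a + b \<notin> {0, -1}"
    and a_ne_b: "a \<noteq> b" and a_ne_1: "a \<noteq> 1" and b_ne_1: "b \<noteq> 1"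
begin

lemma a_plus_b_plus_1_nz: "a + b + 1 \<noteq> 0"
proof
  assume "a + b + 1 = 0"
  then have "a + b = -1" by (simp add: eq_neg_iff_add_eq_0)
  with a_plus_b_notin show False by simp
qed

lemma a_plus_a2_nz: "a + a ^ 2 \<noteq> 0"
proof -
  have "a + a ^ 2 = a * (1 + a)" by (simp add: power2_eq_square algebra_simps)
  with a_notin show ?thesis by (auto simp: add_eq_0_iff)
qed

lemma b_plus_b2_nz: "b + b ^ 2 \<noteq> 0"
proof -
  have "b + b ^ 2 = b * (1 + b)" by (simp add: power2_eq_square algebra_simps)
  with b_notin show ?thesis by (auto simp: add_eq_0_iff)
qed

lemma Pgen_2_nz: "Pgen a b 2 \<noteq> 0"
proof
  assume "Pgen a b 2 = 0"
  then have "restrict_line 1 0 (Pgen a b 2) = 0" by simp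
  then have "Pgen_on_line a b 0 2 = 0" by (simp add: restrict_line_Pgen)
  with a_plus_a2_nz show False by (simp add: Pgen_on_line_2)
qed

lemma two_vanishing_slopes:
  obtains l1 l2 where "l1 \<noteq> l2" and "Pgen_on_line a b l1 2 = 0" and "Pgen_on_line a b l2 2 = 0"
    and "(b + b ^ 2) * (l1 + l2) = - (2 * a * b)" and "(b + b ^ 2) * (l1 * l2) = a + a ^ 2"
proof -
  have "(2 * a * b) ^ 2 - 4 * (b + b ^ 2) * (a + a ^ 2) = - 4 * (a * b * (a + b + 1))"
    by (simp add: power2_eq_square algebra_simps)
  also have "\<dots> \<noteq> 0" using a_notin b_notin a_plus_b_plus_1_nz by simp
  finally have "(2 * a * b) ^ 2 \<noteq> 4 * (b + b ^ 2) * (a + a ^ 2)" by simp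
  from quadratic_two_roots[OF b_plus_b2_nz this] obtain l1 l2 where "l1 \<noteq> l2"
    and "(b + b ^ 2) * l1 ^ 2 + 2 * a * b * l1 + (a + a ^ 2) = 0"
    and "(b + b ^ 2) * l2 ^ 2 + 2 * a * b * l2 + (a + a ^ 2) = 0" by blast
  with quadratic_vieta[OF this] show ?thesis
    by (intro that) (simp_all add: Pgen_on_line_2)
qed

lemma Pgen_on_line_3_nz:
  assumes P2: "Pgen_on_line a b l 2 = 0"
  shows "Pgen_on_line a b l 3 \<noteq> 0"
proof -
  have "l \<noteq> 0"
  proof
    assume "l = 0"
    with P2 a_plus_a2_nz show False by (simp add: Pgen_on_line_2)
  qed
  moreover have "- a - b * l \<noteq> 0"
  proof
    assume m: "- a - b * l = 0"
    then have a: "a = - (b * l)" by algebra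
    with P2 have "a * (1 - l) = 0" by (simp add: Pgen_on_line_def power2_eq_square algebra_simps)
    with a_notin have "l = 1" by auto
    with a a_plus_b_notin show False by simp
  qed
  ultimately show ?thesis
    using Pgen_on_line_values(1)[OF P2] a_plus_b_plus_1_nz by simp
qed

lemma Pgen_on_line_7_nz:
  assumes P2: "Pgen_on_line a b l 2 = 0" and P4: "Pgen_on_line a b l 4 = 0"
  shows "Pgen_on_line a b l 7 \<noteq> 0"
proof -
  define m where "m = - a - b * l"
  define e1 where "e1 = 1 + l + m"
  define e2 where "e2 = l + m + l * m"
  define e3 where "e3 = l * m"
  have P3: "e3 * (a + b + 1) \<noteq> 0"
    using Pgen_on_line_3_nz[OF P2] Pgen_on_line_values(1)[OF P2] by (simp add: e3_def m_def)
  then have e1: "e1 = 0"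
    using P4 Pgen_on_line_values(2)[OF P2] by (simp add: e1_def e3_def m_def)
  have "e2 \<noteq> 0"
  proof
    assume e2: "e2 = 0"
    have m: "m = - 1 - l" using e1 by (simp add: e1_def eq_neg_iff_add_eq_0 algebra_simps)
    have "l ^ 2 = - 1 - l - (l + m + l * m)" unfolding m by (simp add: power2_eq_square algebra_simps)
    then have l2: "l ^ 2 = - 1 - l" using e2 unfolding e2_def by (metis diff_zero)
    have a: "a = 1 + l - b * l" using m by (simp add: m_def algebra_simps)
    have "0 = a + b * l ^ 2 + m ^ 2" using P2 by (simp add: Pgen_on_line_def m_def)
    also have "\<dots> = (1 - b) * (1 + 2 * l)"
      unfolding a m by (simp add: power2_eq_square algebra_simps l2[unfolded power2_eq_square])
    finally have "1 + 2 * l = 0" using b_ne_1 by simp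
    then have "l = - 1 / 2" by (simp add: field_simps eq_neg_iff_add_eq_0)
    with l2 show False by (simp add: power2_eq_square)
  qed
  moreover have "Pgen_on_line a b l 7 = (e1 ^ 4 - 3 * e1 ^ 2 * e2 + 2 * e1 * e3 + e2 ^ 2) * e3 * (a + b + 1)"
    using Pgen_on_line_values(4)[OF P2] by (simp add: e1_def e2_def e3_def m_def)
  ultimately show ?thesis using e1 P3 by simp
qed

lemma Pgen_on_line_6_separates:
  assumes "l1 \<noteq> l2" and P2: "Pgen_on_line a b l1 2 = 0" "Pgen_on_line a b l2 2 = 0"
    and sum: "(b + b ^ 2) * (l1 + l2) = - (2 * a * b)" and prod: "(b + b ^ 2) * (l1 * l2) = a + a ^ 2"
  shows "Pgen_on_line a b l1 6 * Pgen_on_line a b l2 3 ^ 2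
    \<noteq> Pgen_on_line a b l2 6 * Pgen_on_line a b l1 3 ^ 2"
proof -
  define e3 where "e3 l = l * (- a - b * l)" for l
  define N where "N l = (let m = - a - b * l; e1 = 1 + l + m; e2 = l + m + l * m
    in e1 ^ 3 - 2 * e1 * e2 + l * m)" for l
  have P3: "Pgen_on_line a b l 3 = e3 l * (a + b + 1)"
    and P6: "Pgen_on_line a b l 6 = N l * e3 l * (a + b + 1)" if "Pgen_on_line a b l 2 = 0" for l
    using Pgen_on_line_values(1,3)[OF that] by (simp_all add: N_def e3_def Let_def)
  have e3: "e3 l1 \<noteq> 0" "e3 l2 \<noteq> 0"
    using Pgen_on_line_3_nz[OF P2(1)] Pgen_on_line_3_nz[OF P2(2)] by (simp_all add: P3 P2)
  text \<open>\<open>G\<close> is the symmetric cofactor of the antisymmetric \<open>N l1 * e3 l2 - N l2 * e3 l1\<close>, written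
    in \<open>S = l1 + l2\<close> and \<open>T = l1 * l2\<close> so that Vieta's formulas evaluate it.\<close>
  define G where "G S T = (1 - a) * (1 + a ^ 2) * (a + b * S)
    + (b - b ^ 2 - a + a * b ^ 2 + a ^ 2 - a ^ 2 * b) * T - (1 - b) * (1 + b ^ 2) * (a * T * S + b * T ^ 2)"
    for S T
  have NG: "N l1 * e3 l2 - N l2 * e3 l1 = (l1 - l2) * G (l1 + l2) (l1 * l2)"
    by (simp add: N_def e3_def G_def Let_def algebra_simps power2_eq_square power3_eq_cube)
  define B where "B = b + b ^ 2"
  have "B ^ 2 * G (l1 + l2) (l1 * l2)
      = (1 - a) * (1 + a ^ 2) * (a * B ^ 2 + b * (B * (l1 + l2)) * B)
        + (b - b ^ 2 - a + a * b ^ 2 + a ^ 2 - a ^ 2 * b) * (B * (l1 * l2)) * B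
        - (1 - b) * (1 + b ^ 2) * (a * (B * (l1 * l2)) * (B * (l1 + l2)) + b * (B * (l1 * l2)) ^ 2)"
    by (simp add: G_def algebra_simps power2_eq_square)
  also have "\<dots> = (1 - a) * (1 + a ^ 2) * (a * B ^ 2 + b * (- (2 * a * b)) * B)
        + (b - b ^ 2 - a + a * b ^ 2 + a ^ 2 - a ^ 2 * b) * (a + a ^ 2) * B
        - (1 - b) * (1 + b ^ 2) * (a * (a + a ^ 2) * (- (2 * a * b)) + b * (a + a ^ 2) ^ 2)"
    by (simp only: sum[folded B_def] prod[folded B_def])
  also have "\<dots> = - 2 * a * b * (a + b + 1) * (a - b) * (a - 1) * (b - 1)"
    by (simp add: B_def algebra_simps power2_eq_square power3_eq_cube)
  finally have "G (l1 + l2) (l1 * l2) \<noteq> 0"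
    using a_notin b_notin a_plus_b_plus_1_nz a_ne_b a_ne_1 b_ne_1 by auto
  with NG \<open>l1 \<noteq> l2\<close> have "N l1 * e3 l2 - N l2 * e3 l1 \<noteq> 0" by simp
  moreover have "Pgen_on_line a b l1 6 * Pgen_on_line a b l2 3 ^ 2 - Pgen_on_line a b l2 6 * Pgen_on_line a b l1 3 ^ 2
      = (a + b + 1) ^ 3 * e3 l1 * e3 l2 * (N l1 * e3 l2 - N l2 * e3 l1)"
    by (simp add: P2 P3 P6 power2_eq_square power3_eq_cube algebra_simps)
  ultimately show ?thesis using e3 a_plus_b_plus_1_nz by auto
qed

lemma normalized_Pgen_on_line_6_separates:
  assumes "Pgen_on_line a b l1 6 * Pgen_on_line a b l2 3 ^ 2 \<noteq> Pgen_on_line a b l2 6 * Pgen_on_line a b l1 3 ^ 2"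
    and "s1 ^ 3 * Pgen_on_line a b l1 3 = 1" and "s2 ^ 3 * Pgen_on_line a b l2 3 = 1"
  shows "Pgen_on_line a b l1 6 * s1 ^ 6 \<noteq> Pgen_on_line a b l2 6 * s2 ^ 6"
proof
  assume eq: "Pgen_on_line a b l1 6 * s1 ^ 6 = Pgen_on_line a b l2 6 * s2 ^ 6"
  have "Pgen_on_line a b l1 6 * Pgen_on_line a b l2 3 ^ 2
      = Pgen_on_line a b l1 6 * (s1 ^ 3 * Pgen_on_line a b l1 3) ^ 2 * Pgen_on_line a b l2 3 ^ 2"
    using assms(2) by simp
  also have "\<dots> = Pgen_on_line a b l2 6 * (s2 ^ 3 * Pgen_on_line a b l2 3) ^ 2 * Pgen_on_line a b l1 3 ^ 2"
    using eq by (simp add: power_mult_distrib power_add[symmetric] mult_ac)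
  also have "\<dots> = Pgen_on_line a b l2 6 * Pgen_on_line a b l1 3 ^ 2"
    using assms(3) by simp
  finally show False using assms(1) by simp
qed

lemma normalizing_scale:
  assumes P2: "Pgen_on_line a b l 2 = 0"
  obtains s where "s \<noteq> 0" and "s ^ 3 * Pgen_on_line a b l 3 = 1"
    and "restrict_line s l (Pgen a b 2) = 0" and "restrict_line s l (Pgen a b 3) = monom 1 3"
proof -
  obtain s where s: "s ^ 3 = 1 / Pgen_on_line a b l 3"
    using ex_complex_nth_root[of 3] by auto
  then have s3: "s ^ 3 * Pgen_on_line a b l 3 = 1"
    using Pgen_on_line_3_nz[OF P2] by simp
  show ?thesis
  proof (rule that)
    show "s \<noteq> 0" using s3 by auto
  qed (use s3 P2 in \<open>simp_all add: restrict_line_Pgen mult.commute\<close>)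
qed

lemma independent_six_in_R: "\<exists>vs. length vs = 6 \<and> set vs \<subseteq> R_ab a b \<and> lin_indep_over (A_ab a b) vs"
proof -
  obtain l1 l2 where "l1 \<noteq> l2" and P2: "Pgen_on_line a b l1 2 = 0" "Pgen_on_line a b l2 2 = 0"
    and vieta: "(b + b ^ 2) * (l1 + l2) = - (2 * a * b)" "(b + b ^ 2) * (l1 * l2) = a + a ^ 2"
    by (rule two_vanishing_slopes)
  obtain s1 where s1: "s1 \<noteq> 0" "s1 ^ 3 * Pgen_on_line a b l1 3 = 1"
    "restrict_line s1 l1 (Pgen a b 2) = 0" "restrict_line s1 l1 (Pgen a b 3) = monom 1 3"
    using normalizing_scale[OF P2(1)] by blast
  obtain s2 where s2: "s2 \<noteq> 0" "s2 ^ 3 * Pgen_on_line a b l2 3 = 1"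
    "restrict_line s2 l2 (Pgen a b 2) = 0" "restrict_line s2 l2 (Pgen a b 3) = monom 1 3"
    using normalizing_scale[OF P2(2)] by blast
  text \<open>The correction \<open>c P\<^sub>3 P\<^sub>4\<close> keeps \<open>W\<close> from vanishing on either line when \<open>P\<^sub>7\<close> does.\<close>
  have "s ^ 3 * Pgen_on_line a b l 7 \<noteq> 0 \<or> Pgen_on_line a b l 4 \<noteq> 0"
    if "s \<noteq> 0" "Pgen_on_line a b l 2 = 0" for s l
    using Pgen_on_line_7_nz[OF that(2)] that(1) by auto
  from avoid_two_zeros[OF this[OF s1(1) P2(1)] this[OF s2(1) P2(2)]] obtain c
    where c: "s1 ^ 3 * Pgen_on_line a b l1 7 + c * Pgen_on_line a b l1 4 \<noteq> 0"
      "s2 ^ 3 * Pgen_on_line a b l2 7 + c * Pgen_on_line a b l2 4 \<noteq> 0" by blast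
  define W where "W = Pgen a b 7 + cst c * Pgen a b 3 * Pgen a b 4"
  define V where "V = Pgen a b 6"
  have W: "restrict_line s l W = monom (s ^ 4 * (s ^ 3 * Pgen_on_line a b l 7 + c * Pgen_on_line a b l 4)) 7"
    if "restrict_line s l (Pgen a b 3) = monom 1 3" for s l
    using that by (simp add: W_def restrict_line_add restrict_line_mult restrict_line_Pgen mult_monom
        add_monom smult_monom algebra_simps power_add[symmetric])
  have V: "restrict_line s l V = monom (Pgen_on_line a b l 6 * s ^ 6) 6" for s l
    by (simp add: V_def restrict_line_Pgen)
  have u: "Pgen_on_line a b l1 6 * s1 ^ 6 \<noteq> Pgen_on_line a b l2 6 * s2 ^ 6"
    using Pgen_on_line_6_separates[OF \<open>l1 \<noteq> l2\<close> P2 vieta] s1(2) s2(2)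
    by (rule normalized_Pgen_on_line_6_separates)
  interpret separating_lines "Pgen a b 2" "Pgen a b 3" W V
    s1 l1 "Pgen_on_line a b l1 6 * s1 ^ 6" "s1 ^ 4 * (s1 ^ 3 * Pgen_on_line a b l1 7 + c * Pgen_on_line a b l1 4)"
    s2 l2 "Pgen_on_line a b l2 6 * s2 ^ 6" "s2 ^ 4 * (s2 ^ 3 * Pgen_on_line a b l2 7 + c * Pgen_on_line a b l2 4)"
    by unfold_locales (use Pgen_2_nz s1 s2 c u in \<open>simp_all add: W V\<close>)
  have "set (basis6 W V) \<subseteq> R_ab a b"
  proof -
    have "W \<in> R_ab a b" "V \<in> R_ab a b"
      unfolding W_def V_def R_ab_def by (intro subalg.add subalg.mult subalg.const subalg.gen; auto)+
    then show ?thesis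
      by (auto simp: basis6_def R_ab_def intro: subalg.mult subalg_1 subalg_power)
  qed
  moreover have "lin_indep_over (A_ab a b) (basis6 W V)"
    unfolding A_ab_def by (rule basis6_independent)
  ultimately show ?thesis by (intro exI[of _ "basis6 W V"]) simp
qed

lemma P2_P3_algebraically_independent:
  assumes "subst2 (Pgen a b 2) (Pgen a b 3) F = 0"
  shows "F = 0"
proof -
  obtain l1 l2 where "Pgen_on_line a b l1 2 = 0" by (rule two_vanishing_slopes)
  then obtain s where P: "restrict_line s l1 (Pgen a b 2) = 0"
    and Q: "restrict_line s l1 (Pgen a b 3) = monom 1 3"
    by (rule normalizing_scale)
  show ?thesis
    by (rule subst2_eq_0_imp_eq_0[OF Pgen_2_nz P _ assms]) (simp add: Q degree_monom_eq)
qed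

lemma length_le_6: "lin_indep_over (A_ab a b) vs \<Longrightarrow> length vs \<le> 6"
  unfolding A_ab_def
  by (rule length_le_6_if_lin_indep_over[OF P2_P3_algebraically_independent
        total_degree_le_Pgen total_degree_le_Pgen])

end

theorem proposition5p8:
  fixes a b :: complex
  assumes "a \<notin> {0, -1}" and "b \<notin> {0, -1}" and "a + b \<notin> {0, -1}"
    and "a \<noteq> b" and "a \<noteq> 1" and "b \<noteq> 1"
  shows "has_rank_over (A_ab a b) (R_ab a b) 6"
proof -
  interpret nondegenerate_ab a b
    using assms by unfold_locales
  show ?thesis
    unfolding has_rank_over_def using independent_six_in_R length_le_6 by blast
qed

end
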